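(* Let $H$ be a real Hilbert space, $A:H\to c_0$ bounded linear with adjoint $A^*:\ell^1\to H$ (identifying $c_0^*=\ell^1$), let $H_n\subset H$ be a subspace of dimension $n$ with $\mathcal N(A)\cap H_n=\{0\}$, let $P_n$ be the orthogonal projection onto $H_n$, and let $f^\delta\in H$. Then $u^n\in\ell^1$ is a solution of $$\min_{u\in\ell^1}\|u\|_1\quad\text{subject to}\quad \langle z,A^*u\rangle=\langle z,f^\delta\rangle\ \ \forall z\in H_n$$ if and only if $u^n\in E_n$ and $\langle z,A^*u^n\rangle=\langle z,f^\delta\rangle$ for all $z\in H_n$, where $$E_n=(\partial\|\cdot\|_1)^{-1}(AH_n)=\{u\in\ell^1:\ \partial\|\cdot\|_1(u)\cap AH_n\neq\emptyset\}.$$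
   Context: For $u\in\ell^1$, $\partial\|\cdot\|_1(u)=\{\xi\in\ell^\infty:\ \|\xi\|_\infty\le1,\ \sum_i\xi_iu_i=\|u\|_1\}$, i.e. $\xi_i=u_i/|u_i|$ if $u_i\ne0$ and $\xi_i\in[-1,1]$ if $u_i=0$. $AH_n=\{Az: z\in H_n\}\subset c_0\subset\ell^\infty$. $A^*$ is defined by $\langle A^*u,z\rangle=\sum_iu_i(Az)_i$. *)

theory Defs
  imports "HOL-Analysis.Analysis"
begin

definition ell1 :: "(nat \<Rightarrow> real) set" where
  "ell1 = {u. summable (\<lambda>i. \<bar>u i\<bar>)}"

definition c0 :: "(nat \<Rightarrow> real) set" where
  "c0 = {x. x \<longlonglongrightarrow> 0}"

definition l1norm :: "(nat \<Rightarrow> real) \<Rightarrow> real" where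
  "l1norm u = (\<Sum>i. \<bar>u i\<bar>)"

definition subdiff_l1 :: "(nat \<Rightarrow> real) \<Rightarrow> (nat \<Rightarrow> real) set" where
  "subdiff_l1 u = {\<xi>. (\<forall>i. \<bar>\<xi> i\<bar> \<le> 1) \<and> (\<Sum>i. \<xi> i * u i) = l1norm u}"

definition En :: "('h \<Rightarrow> (nat \<Rightarrow> real)) \<Rightarrow> 'h set \<Rightarrow> (nat \<Rightarrow> real) set" where
  "En A Hn = {u \<in> ell1. subdiff_l1 u \<inter> A ` Hn \<noteq> {}}"

definition bounded_linear_c0 :: "('h::real_normed_vector \<Rightarrow> (nat \<Rightarrow> real)) \<Rightarrow> bool" where
  "bounded_linear_c0 A \<longleftrightarrow> (\<forall>x y i. A (x + y) i = A x i + A y i) \<and>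
     (\<forall>c x i. A (c *\<^sub>R x) i = c * A x i) \<and> (\<forall>x. A x \<in> c0) \<and>
     (\<exists>K. \<forall>x i. \<bar>A x i\<bar> \<le> K * norm x)"

definition is_adjoint_l1 :: "('h::real_inner \<Rightarrow> (nat \<Rightarrow> real)) \<Rightarrow> ((nat \<Rightarrow> real) \<Rightarrow> 'h) \<Rightarrow> bool" where
  "is_adjoint_l1 A Astar \<longleftrightarrow> (\<forall>u\<in>ell1. \<forall>z. inner (Astar u) z = (\<Sum>i. u i * A z i))"

definition constraint :: "((nat \<Rightarrow> real) \<Rightarrow> 'h::real_inner) \<Rightarrow> 'h set \<Rightarrow> 'h \<Rightarrow> (nat \<Rightarrow> real) \<Rightarrow> bool" where
  "constraint Astar Hn f u \<longleftrightarrow> (\<forall>z\<in>Hn. inner z (Astar u) = inner z f)"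

definition is_min_solution :: "((nat \<Rightarrow> real) \<Rightarrow> 'h::real_inner) \<Rightarrow> 'h set \<Rightarrow> 'h \<Rightarrow> (nat \<Rightarrow> real) \<Rightarrow> bool" where
  "is_min_solution Astar Hn f un \<longleftrightarrow> un \<in> ell1 \<and> constraint Astar Hn f un \<and>
     (\<forall>u\<in>ell1. constraint Astar Hn f u \<longrightarrow> l1norm un \<le> l1norm u)"

end

theory Submission
  imports Defs
begin

(* Sufficiency is weak duality: if A z lies in the subdifferential at u^n, then for every
   feasible u, \<parallel>u^n\<parallel>_1 = <z, A* u^n> = <z, f> = <z, A* u> = \<Sum> u_i (A z)_i \<le> \<parallel>u\<parallel>_1.
   Necessity is strong duality for the finitely many constraints. The optimal value q(y) of the
   problem with data y is sublinear on the finite-dimensional space of data y \<in> H_n that some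
   u \<in> l^1 can match; finite-dimensional Hahn-Banach gives a linear functional below q touching
   it at the data of f, and its Riesz representer w \<in> H_n satisfies <w, A* u> \<le> \<parallel>u\<parallel>_1 for all u,
   with equality at u^n. Testing with \<plusminus> unit sequences shows \<parallel>A w\<parallel>_\<infinity> \<le> 1. *)

section \<open>Finite-dimensional Hahn-Banach\<close>

definition linear_functional_on :: "'a::real_vector set \<Rightarrow> ('a \<Rightarrow> real) \<Rightarrow> bool" where
  "linear_functional_on S g \<longleftrightarrow>
     (\<forall>x\<in>S. \<forall>y\<in>S. g (x + y) = g x + g y) \<and> (\<forall>x\<in>S. \<forall>t. g (t *\<^sub>R x) = t * g x)"

definition sublinear_on :: "'a::real_vector set \<Rightarrow> ('a \<Rightarrow> real) \<Rightarrow> bool" where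
  "sublinear_on S q \<longleftrightarrow>
     (\<forall>x\<in>S. \<forall>y\<in>S. q (x + y) \<le> q x + q y) \<and> (\<forall>x\<in>S. \<forall>t\<ge>0. q (t *\<^sub>R x) = t * q x)"

lemma sublinear_on_subset: "sublinear_on T q \<Longrightarrow> S \<subseteq> T \<Longrightarrow> sublinear_on S q"
  unfolding sublinear_on_def by blast

lemma sublinear_on_zero: "sublinear_on S q \<Longrightarrow> 0 \<in> S \<Longrightarrow> q 0 = 0"
  unfolding sublinear_on_def by (metis mult_zero_left order_refl scale_zero_left)

lemma linear_functional_on_zero: "linear_functional_on S g \<Longrightarrow> 0 \<in> S \<Longrightarrow> g 0 = 0"
  unfolding linear_functional_on_def by (metis mult_zero_left scale_zero_left)

lemma span_insert_subspace:
  assumes "subspace M"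
  shows "v \<in> span (insert a M) \<longleftrightarrow> (\<exists>x\<in>M. \<exists>k. v = x + k *\<^sub>R a)"
proof -
  have "span M = M" using assms by (simp add: span_eq_iff)
  then have "v \<in> span (insert a M) \<longleftrightarrow> (\<exists>k. v - k *\<^sub>R a \<in> M)"
    by (simp only: span_insert mem_Collect_eq)
  also have "\<dots> \<longleftrightarrow> (\<exists>x\<in>M. \<exists>k. v = x + k *\<^sub>R a)"
    by (metis add_diff_cancel diff_add_cancel)
  finally show ?thesis .
qed

lemma affine_extension_exists:
  assumes M: "subspace M" and a: "a \<notin> M"
  shows "\<exists>G. \<forall>x\<in>M. \<forall>k. G (x + k *\<^sub>R a) = g x + k * c"
proof -
  have unique: "k = k'" if "x \<in> M" "x' \<in> M" "x + k *\<^sub>R a = x' + k' *\<^sub>R a" for x x' k k'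
  proof (rule ccontr)
    assume "k \<noteq> k'"
    have "(k - k') *\<^sub>R a = x' - x"
      using that(3) by (simp add: algebra_simps)
    moreover have "a = (1 / (k - k')) *\<^sub>R ((k - k') *\<^sub>R a)"
      using \<open>k \<noteq> k'\<close> by simp
    ultimately have "a = (1 / (k - k')) *\<^sub>R (x' - x)"
      by simp
    also have "\<dots> \<in> M" using M that(1,2) by (simp add: subspace_scale subspace_diff)
    finally show False using a by simp
  qed
  define k where "k v = (THE k. v - k *\<^sub>R a \<in> M)" for v
  have "k (x + l *\<^sub>R a) = l" if "x \<in> M" for x l
    unfolding k_def
  proof (rule the_equality)
    fix l' assume "x + l *\<^sub>R a - l' *\<^sub>R a \<in> M"
    with that show "l' = l"
      using unique[of "x + l *\<^sub>R a - l' *\<^sub>R a" x l' l] by simp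
  qed (use that in simp)
  then have "\<forall>x\<in>M. \<forall>l. g (x + l *\<^sub>R a - k (x + l *\<^sub>R a) *\<^sub>R a) + k (x + l *\<^sub>R a) * c = g x + l * c"
    by simp
  then show ?thesis by (intro exI[of _ "\<lambda>v. g (v - k v *\<^sub>R a) + k v * c"]) simp
qed

lemma linear_functional_on_affine_extension:
  assumes M: "subspace M" and g: "linear_functional_on M g"
    and G: "\<And>x k. x \<in> M \<Longrightarrow> G (x + k *\<^sub>R a) = g x + k * c"
  shows "linear_functional_on (span (insert a M)) G"
  unfolding linear_functional_on_def
proof (intro conjI ballI allI)
  note decomp = span_insert_subspace[OF M]
  fix v w assume "v \<in> span (insert a M)" "w \<in> span (insert a M)"
  then obtain x k x' k' where x: "x \<in> M" "x' \<in> M" and vw: "v = x + k *\<^sub>R a" "w = x' + k' *\<^sub>R a"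
    using decomp by meson
  have "v + w = (x + x') + (k + k') *\<^sub>R a"
    using vw by (simp add: algebra_simps)
  then have "G (v + w) = g (x + x') + (k + k') * c"
    using G x M by (simp add: subspace_add)
  also have "\<dots> = G v + G w"
    using G x vw g unfolding linear_functional_on_def by (simp add: algebra_simps)
  finally show "G (v + w) = G v + G w" .
next
  note decomp = span_insert_subspace[OF M]
  fix v t assume "v \<in> span (insert a M)"
  then obtain x k where x: "x \<in> M" and v: "v = x + k *\<^sub>R a"
    using decomp by meson
  have "t *\<^sub>R v = t *\<^sub>R x + (t * k) *\<^sub>R a"
    using v by (simp add: algebra_simps)
  then have "G (t *\<^sub>R v) = g (t *\<^sub>R x) + (t * k) * c"
    using G x M by (simp add: subspace_scale)
  also have "\<dots> = t * G v"
    using G x v g unfolding linear_functional_on_def by (simp add: algebra_simps)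
  finally show "G (t *\<^sub>R v) = t * G v" .
qed

lemma affine_extension_le:
  assumes M: "subspace M" and q: "sublinear_on (span (insert a M)) q"
    and g: "linear_functional_on M g" and g_le: "\<forall>x\<in>M. g x \<le> q x"
    and c_lower: "\<forall>y\<in>M. g y - q (y - a) \<le> c"
    and c_upper: "\<forall>y\<in>M. c \<le> q (y + a) - g y"
    and G: "\<And>x k. x \<in> M \<Longrightarrow> G (x + k *\<^sub>R a) = g x + k * c"
    and v_span: "v \<in> span (insert a M)"
  shows "G v \<le> q v"
proof -
  have q_hom: "q (t *\<^sub>R w) = t * q w" if "w \<in> span (insert a M)" "t \<ge> 0" for w t
    using q that unfolding sublinear_on_def by blast
  have M_sub: "M \<subseteq> span (insert a M)"
    by (meson span_superset subset_insertI subset_trans)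
  obtain x k where x: "x \<in> M" and v: "v = x + k *\<^sub>R a"
    using v_span span_insert_subspace[OF M] by meson
  have Gv: "G v = g x + k * c" using G[OF x] v by simp
  consider "k = 0" | "k > 0" | "k < 0" by linarith
  then show ?thesis
  proof cases
    case 1
    then show ?thesis using Gv g_le x v by simp
  next
    case 2
    let ?y = "(1 / k) *\<^sub>R x"
    have y: "?y \<in> M" using x M by (simp add: subspace_scale)
    have "?y + a \<in> span (insert a M)"
      using y M_sub by (simp add: span_add span_base)
    moreover have "k *\<^sub>R (?y + a) = v" using v 2 by (simp add: algebra_simps)
    ultimately have "q v = k * q (?y + a)" using q_hom[of "?y + a" k] 2 by simp
    moreover have "g x = k * g ?y" using g x 2 unfolding linear_functional_on_def by simp
    moreover have "k * c \<le> k * (q (?y + a) - g ?y)"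
      using c_upper y 2 by (simp add: mult_left_mono)
    ultimately show ?thesis using Gv by (simp add: algebra_simps)
  next
    case 3
    define s where "s = - k"
    have s: "s > 0" "k = - s" using 3 by (simp_all add: s_def)
    let ?y = "(1 / s) *\<^sub>R x"
    have y: "?y \<in> M" using x M by (simp add: subspace_scale)
    have "?y - a \<in> span (insert a M)"
      using y M_sub by (simp add: span_diff span_base)
    moreover have "s *\<^sub>R (?y - a) = v" using v s by (simp add: algebra_simps)
    ultimately have "q v = s * q (?y - a)" using q_hom[of "?y - a" s] s by simp
    moreover have "g x = s * g ?y" using g x s unfolding linear_functional_on_def by simp
    moreover have "s * (g ?y - q (?y - a)) \<le> s * c"
      using c_lower y s by (simp add: mult_left_mono)
    ultimately show ?thesis using Gv s by (simp add: algebra_simps)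
  qed
qed

lemma linear_functional_extend_with_value:
  assumes M: "subspace M" and a: "a \<notin> M"
    and q: "sublinear_on (span (insert a M)) q"
    and g: "linear_functional_on M g" and g_le: "\<forall>x\<in>M. g x \<le> q x"
    and c_lower: "\<forall>y\<in>M. g y - q (y - a) \<le> c"
    and c_upper: "\<forall>y\<in>M. c \<le> q (y + a) - g y"
  shows "\<exists>G. linear_functional_on (span (insert a M)) G \<and> (\<forall>x\<in>M. G x = g x) \<and>
           G a = c \<and> (\<forall>x\<in>span (insert a M). G x \<le> q x)"
proof -
  obtain G where G: "\<And>x k. x \<in> M \<Longrightarrow> G (x + k *\<^sub>R a) = g x + k * c"
    using affine_extension_exists[OF M a] by blast
  have "\<forall>x\<in>M. G x = g x" using G[of _ 0] by simp
  moreover have "G a = c"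
    using G[of 0 1] M g by (simp add: subspace_0 linear_functional_on_zero)
  ultimately show ?thesis
    using linear_functional_on_affine_extension[OF M g G] affine_extension_le[OF assms(1,3-7) G]
    by blast
qed

lemma linear_functional_extend_insert:
  assumes M: "subspace M"
    and q: "sublinear_on (span (insert a M)) q"
    and g: "linear_functional_on M g" and g_le: "\<forall>x\<in>M. g x \<le> q x"
  shows "\<exists>G. linear_functional_on (span (insert a M)) G \<and> (\<forall>x\<in>M. G x = g x) \<and>
           (\<forall>x\<in>span (insert a M). G x \<le> q x)"
proof (cases "a \<in> M")
  case True
  then have "span (insert a M) = M" using M by (simp add: insert_absorb span_eq_iff)
  then show ?thesis using g g_le by auto
next
  case False
  have M_sub: "M \<subseteq> span (insert a M)"
    by (meson span_superset subset_insertI subset_trans)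
  have a: "a \<in> span (insert a M)" by (simp add: span_base)
  \<comment> \<open>the admissible values for the new coordinate form a nonempty interval\<close>
  have sandwich: "g y - q (y - a) \<le> q (y' + a) - g y'" if y: "y \<in> M" "y' \<in> M" for y y'
  proof -
    have "g y + g y' = g (y + y')" using g y unfolding linear_functional_on_def by simp
    also have "\<dots> \<le> q (y + y')" using g_le y M by (simp add: subspace_add)
    also have "\<dots> = q ((y - a) + (y' + a))" by simp
    also have "\<dots> \<le> q (y - a) + q (y' + a)"
      using q y M_sub a unfolding sublinear_on_def by (meson span_add span_diff subsetD)
    finally show ?thesis by simp
  qed
  define c where "c = Sup {g y - q (y - a) | y. y \<in> M}"
  have "0 \<in> M" using M by (rule subspace_0)
  then have "g y - q (y - a) \<le> c" "c \<le> q (y + a) - g y" if "y \<in> M" for y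
    unfolding c_def using that sandwich
    by (auto intro!: cSup_upper cSup_least bdd_aboveI[where M = "q (0 + a) - g 0"])
  then show ?thesis
    using linear_functional_extend_with_value[OF M False q g g_le] by blast
qed

lemma span_span_Un: "span (span A \<union> B) = span (A \<union> B)"
proof
  show "span (span A \<union> B) \<subseteq> span (A \<union> B)"
    by (rule span_minimal) (auto intro: span_mono[THEN subsetD] span_base)
  show "span (A \<union> B) \<subseteq> span (span A \<union> B)"
    by (rule span_mono) (use span_superset in auto)
qed

lemma hahn_banach_finite_dim:
  assumes "finite T" and "subspace M"
    and "sublinear_on (span (M \<union> T)) q"
    and "linear_functional_on M g" and "\<forall>x\<in>M. g x \<le> q x"
  shows "\<exists>G. linear_functional_on (span (M \<union> T)) G \<and> (\<forall>x\<in>M. G x = g x) \<and>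
           (\<forall>x\<in>span (M \<union> T). G x \<le> q x)"
  using assms
proof (induction T arbitrary: M g rule: finite_induct)
  case empty
  then have "span M = M" by (simp add: span_eq_iff)
  then show ?case using empty.prems unfolding Un_empty_right by metis
next
  case (insert a T)
  let ?M' = "span (insert a M)"
  have span_eq: "span (?M' \<union> T) = span (M \<union> insert a T)"
    by (metis Un_insert_left Un_insert_right span_span_Un)
  have "sublinear_on ?M' q"
    using insert.prems(2) by (rule sublinear_on_subset) (intro span_mono; auto)
  then obtain G1 where G1: "linear_functional_on ?M' G1" "\<forall>x\<in>M. G1 x = g x" "\<forall>x\<in>?M'. G1 x \<le> q x"
    using linear_functional_extend_insert insert.prems by blast
  obtain G where G: "linear_functional_on (span (?M' \<union> T)) G" "\<forall>x\<in>?M'. G x = G1 x"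
      "\<forall>x\<in>span (?M' \<union> T). G x \<le> q x"
    using insert.IH[OF subspace_span _ G1(1,3)] insert.prems(2) span_eq by auto
  have "M \<subseteq> ?M'" by (meson span_superset subset_insertI subset_trans)
  then have "\<forall>x\<in>M. G x = g x" using G(2) G1(2) by auto
  then show ?case using G(1,3) unfolding span_eq by blast
qed

section \<open>Riesz representation on finite-dimensional subspaces\<close>

lemma finite_dim_riesz:
  fixes g :: "'a::real_inner \<Rightarrow> real"
  assumes "finite C" and g: "linear_functional_on (span C) g"
  shows "\<exists>w\<in>span C. \<forall>z\<in>span C. w \<bullet> z = g z"
proof -
  obtain D0 where "finite D0" "span D0 = span C" "pairwise orthogonal D0"
    using basis_orthogonal[OF \<open>finite C\<close>] by blast
  define D where "D = D0 - {0}"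
  have D: "finite D" "span D = span C" "pairwise orthogonal D" "0 \<notin> D"
    using \<open>finite D0\<close> \<open>span D0 = span C\<close> \<open>pairwise orthogonal D0\<close>
    by (auto simp: D_def pairwise_def span_delete_0)
  define w where "w = (\<Sum>d\<in>D. (g d / (d \<bullet> d)) *\<^sub>R d)"
  have w_span: "w \<in> span D" unfolding w_def by (intro span_sum span_scale span_base)
  have w_basis: "w \<bullet> d' = g d'" if d': "d' \<in> D" for d'
  proof -
    have "w \<bullet> d' = (\<Sum>d\<in>D. (g d / (d \<bullet> d)) * (d \<bullet> d'))"
      unfolding w_def by (simp add: inner_sum_left)
    also have "\<dots> = (\<Sum>d\<in>D. if d = d' then g d' else 0)"
    proof (rule sum.cong)
      fix d assume "d \<in> D"
      then show "(g d / (d \<bullet> d)) * (d \<bullet> d') = (if d = d' then g d' else 0)"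
        using D(3,4) d' unfolding pairwise_def orthogonal_def by auto
    qed simp
    also have "\<dots> = g d'" using D(1) d' by simp
    finally show ?thesis .
  qed
  have g_lin: "g (c *\<^sub>R x + y) = c * g x + g y" if "x \<in> span D" "y \<in> span D" for c x y
    using g that D(2) unfolding linear_functional_on_def by (simp add: span_scale)
  have "z \<in> span D \<and> w \<bullet> z = g z" if "z \<in> span D" for z
    using that
  proof (induction rule: span_induct_alt)
    case base
    then show ?case using g D(2) by (simp add: linear_functional_on_zero span_zero)
  next
    case (step c x y)
    then show ?case
      using w_basis g_lin[of x y c] by (simp add: span_add span_scale span_base inner_add_right)
  qed
  then show ?thesis using w_span D(2) by auto
qed

lemma projection_onto_finite_span_exists:
  fixes x :: "'a::real_inner"
  assumes "finite C"
  shows "\<exists>p\<in>span C. \<forall>z\<in>span C. z \<bullet> p = z \<bullet> x"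
proof -
  have "linear_functional_on (span C) (\<lambda>z. x \<bullet> z)"
    unfolding linear_functional_on_def by (simp add: inner_add_right)
  then show ?thesis
    using finite_dim_riesz[OF assms] by (metis inner_commute)
qed

lemma sublinear_supporting_functional:
  fixes q :: "'a::real_inner \<Rightarrow> real"
  assumes C: "finite C" and q: "sublinear_on (span C) q" and y0: "y0 \<in> span C"
  shows "\<exists>w\<in>span C. (\<forall>y\<in>span C. w \<bullet> y \<le> q y) \<and> w \<bullet> y0 = q y0"
proof -
  have q0: "q 0 = 0" using q by (simp add: sublinear_on_zero span_zero)
  have q_y0: "sublinear_on (span {y0}) q"
    using q by (rule sublinear_on_subset) (simp add: span_minimal y0)
  obtain G1 where G1: "linear_functional_on (span {y0}) G1" "G1 y0 = q y0"
      "\<forall>x\<in>span {y0}. G1 x \<le> q x"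
  proof (cases "y0 = 0")
    case True
    then show ?thesis
      using that[of "\<lambda>_. 0"] q0 by (simp add: linear_functional_on_def)
  next
    case False
    have span_y0: "span (insert y0 {0}) = span {y0}" by (simp add: insert_commute)
    have "0 = q (y0 + - y0)" using q0 by simp
    also have "\<dots> \<le> q y0 + q (- y0)"
      using q_y0 unfolding sublinear_on_def by (meson span_base span_neg singletonI)
    finally have "- q (- y0) \<le> q y0" by simp
    then show ?thesis
      using linear_functional_extend_with_value[of "{0}" y0 q "\<lambda>_. 0" "q y0"] False q0 q_y0 that
      by (auto simp: span_y0 linear_functional_on_def)
  qed
  have span_C: "span (span {y0} \<union> C) = span C"
    using y0 by (simp add: span_span_Un span_redundant)
  obtain G where G: "linear_functional_on (span C) G" "G y0 = q y0" "\<forall>x\<in>span C. G x \<le> q x"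
    using hahn_banach_finite_dim[OF C subspace_span _ G1(1,3)] q G1(2) span_C
    by (metis span_base singletonI)
  obtain w where w: "w \<in> span C" "\<forall>z\<in>span C. w \<bullet> z = G z"
    using finite_dim_riesz[OF C G(1)] by blast
  have "\<forall>y\<in>span C. w \<bullet> y \<le> q y" using w(2) G(3) by simp
  moreover have "w \<bullet> y0 = q y0" using w(2) G(2) y0 by simp
  ultimately show ?thesis using w(1) by blast
qed

lemma subspace_of_finite_span_has_finite_basis:
  assumes "subspace R" "R \<subseteq> span B" "finite B"
  obtains C where "finite C" "span C = R"
proof -
  obtain C where C: "C \<subseteq> R" "independent C" "R \<subseteq> span C"
    by (rule basis_exists[of R])
  have "C \<subseteq> span B" using C(1) assms(2) by (rule subset_trans)
  then have "finite C" using independent_span_bound[OF assms(3) C(2)] by simp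
  moreover have "span C = R"
    using span_minimal[OF C(1) assms(1)] C(3) by (rule subset_antisym)
  ultimately show thesis by (rule that)
qed

section \<open>Sequences in l1 and the adjoint\<close>

lemma ell1_add: "u \<in> ell1 \<Longrightarrow> v \<in> ell1 \<Longrightarrow> (\<lambda>i. u i + v i) \<in> ell1"
  unfolding ell1_def mem_Collect_eq
  by (rule summable_comparison_test'[OF summable_add[of "\<lambda>i. \<bar>u i\<bar>" "\<lambda>i. \<bar>v i\<bar>"]])
     (auto simp: abs_triangle_ineq)

lemma zero_ell1: "(\<lambda>_. 0) \<in> ell1"
  unfolding ell1_def by simp

lemma ell1_scale: "u \<in> ell1 \<Longrightarrow> (\<lambda>i. t * u i) \<in> ell1"
  unfolding ell1_def by (simp add: abs_mult summable_mult)

lemma l1norm_nonneg: "u \<in> ell1 \<Longrightarrow> 0 \<le> l1norm u"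
  unfolding ell1_def l1norm_def by (simp add: suminf_nonneg)

lemma l1norm_add:
  assumes u: "u \<in> ell1" and v: "v \<in> ell1"
  shows "l1norm (\<lambda>i. u i + v i) \<le> l1norm u + l1norm v"
proof -
  have su: "summable (\<lambda>i. \<bar>u i\<bar>)" and sv: "summable (\<lambda>i. \<bar>v i\<bar>)"
    using u v unfolding ell1_def by auto
  have "(\<Sum>i. \<bar>u i + v i\<bar>) \<le> (\<Sum>i. \<bar>u i\<bar> + \<bar>v i\<bar>)"
    using ell1_add[OF u v] unfolding ell1_def
    by (intro suminf_le) (auto simp: abs_triangle_ineq summable_add[OF su sv])
  also have "\<dots> = (\<Sum>i. \<bar>u i\<bar>) + (\<Sum>i. \<bar>v i\<bar>)" by (rule suminf_add[OF su sv, symmetric])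
  finally show ?thesis unfolding l1norm_def .
qed

lemma l1norm_scale: "u \<in> ell1 \<Longrightarrow> l1norm (\<lambda>i. t * u i) = \<bar>t\<bar> * l1norm u"
  unfolding l1norm_def ell1_def by (simp add: abs_mult suminf_mult)

lemma summable_ell1_mult_bounded:
  assumes "u \<in> ell1" "\<forall>i. \<bar>x i\<bar> \<le> K"
  shows "summable (\<lambda>i. u i * x i)"
proof (rule summable_comparison_test')
  show "summable (\<lambda>i. \<bar>u i\<bar> * K)"
    using assms(1) unfolding ell1_def by (simp add: summable_mult2)
  show "norm (u i * x i) \<le> \<bar>u i\<bar> * K" for i
    using assms(2) by (simp add: abs_mult mult_left_mono)
qed

lemma suminf_mult_le_l1norm:
  assumes "u \<in> ell1" "\<forall>i. \<bar>\<xi> i\<bar> \<le> 1"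
  shows "(\<Sum>i. u i * \<xi> i) \<le> l1norm u"
  unfolding l1norm_def
proof (rule suminf_le)
  show "u i * \<xi> i \<le> \<bar>u i\<bar>" for i
  proof -
    have "u i * \<xi> i \<le> \<bar>u i\<bar> * \<bar>\<xi> i\<bar>" by (metis abs_ge_self abs_mult)
    also have "\<dots> \<le> \<bar>u i\<bar>" using assms(2) mult_left_mono[of "\<bar>\<xi> i\<bar>" 1 "\<bar>u i\<bar>"] by simp
    finally show ?thesis .
  qed
  show "summable (\<lambda>i. u i * \<xi> i)" by (rule summable_ell1_mult_bounded[OF assms])
  show "summable (\<lambda>i. \<bar>u i\<bar>)" using assms(1) unfolding ell1_def by simp
qed

definition unit_seq :: "nat \<Rightarrow> nat \<Rightarrow> real" where
  "unit_seq i = (\<lambda>j. if j = i then 1 else 0)"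

lemma unit_seq_sums: "(\<lambda>j. unit_seq i j * x j) sums x i"
proof -
  have "(\<lambda>j. unit_seq i j * x j) = (\<lambda>j. if j = i then x j else 0)"
    by (auto simp: unit_seq_def)
  then show ?thesis using sums_single[of i x] by simp
qed

lemma unit_seq_ell1: "unit_seq i \<in> ell1"
  and l1norm_unit_seq: "l1norm (unit_seq i) = 1"
proof -
  have "(\<lambda>j. \<bar>unit_seq i j\<bar>) = (\<lambda>j. if j = i then 1 else 0)"
    by (auto simp: unit_seq_def)
  then have "(\<lambda>j. \<bar>unit_seq i j\<bar>) sums 1"
    using sums_single[of i "\<lambda>_. 1::real"] by simp
  then show "unit_seq i \<in> ell1" "l1norm (unit_seq i) = 1"
    unfolding ell1_def l1norm_def by (auto simp: sums_iff)
qed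

lemma summable_mult_bounded_linear_c0:
  assumes "bounded_linear_c0 A" "u \<in> ell1"
  shows "summable (\<lambda>i. u i * A z i)"
proof -
  obtain K where "\<forall>x i. \<bar>A x i\<bar> \<le> K * norm x"
    using assms(1) unfolding bounded_linear_c0_def by blast
  then show ?thesis by (intro summable_ell1_mult_bounded[OF assms(2)]) blast
qed

lemma adjoint_l1_add:
  assumes A: "bounded_linear_c0 A" and adj: "is_adjoint_l1 A Astar"
    and u: "u \<in> ell1" and v: "v \<in> ell1"
  shows "Astar (\<lambda>i. u i + v i) = Astar u + Astar v"
proof -
  have "Astar (\<lambda>i. u i + v i) \<bullet> z = (Astar u + Astar v) \<bullet> z" for z
  proof -
    have "Astar (\<lambda>i. u i + v i) \<bullet> z = (\<Sum>i. u i * A z i + v i * A z i)"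
      using adj ell1_add[OF u v] unfolding is_adjoint_l1_def by (simp add: distrib_right)
    also have "\<dots> = (\<Sum>i. u i * A z i) + (\<Sum>i. v i * A z i)"
      using summable_mult_bounded_linear_c0[OF A] u v by (intro suminf_add[symmetric])
    also have "\<dots> = (Astar u + Astar v) \<bullet> z"
      using adj u v unfolding is_adjoint_l1_def by (simp add: inner_add_left)
    finally show ?thesis .
  qed
  then show ?thesis using vector_eq_rdot by blast
qed

lemma adjoint_l1_scale:
  assumes A: "bounded_linear_c0 A" and adj: "is_adjoint_l1 A Astar" and u: "u \<in> ell1"
  shows "Astar (\<lambda>i. t * u i) = t *\<^sub>R Astar u"
proof -
  have "Astar (\<lambda>i. t * u i) \<bullet> z = (t *\<^sub>R Astar u) \<bullet> z" for z
  proof -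
    have "Astar (\<lambda>i. t * u i) \<bullet> z = (\<Sum>i. t * (u i * A z i))"
      using adj ell1_scale[OF u] unfolding is_adjoint_l1_def by (simp add: ac_simps)
    also have "\<dots> = t * (\<Sum>i. u i * A z i)"
      using summable_mult_bounded_linear_c0[OF A u] by (rule suminf_mult)
    also have "\<dots> = (t *\<^sub>R Astar u) \<bullet> z"
      using adj u unfolding is_adjoint_l1_def by simp
    finally show ?thesis .
  qed
  then show ?thesis using vector_eq_rdot by blast
qed

lemma inner_adjoint_l1_unit_seq:
  assumes "is_adjoint_l1 A Astar"
  shows "Astar (unit_seq i) \<bullet> z = A z i"
  using assms unit_seq_ell1 sums_unique[OF unit_seq_sums]
  unfolding is_adjoint_l1_def by metis

section \<open>The value function of the constrained problem\<close>

definition feasible_data :: "((nat \<Rightarrow> real) \<Rightarrow> 'h::real_inner) \<Rightarrow> 'h set \<Rightarrow> 'h set" where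
  "feasible_data Astar Hn = {y \<in> Hn. \<exists>u\<in>ell1. constraint Astar Hn y u}"

definition min_l1_value :: "((nat \<Rightarrow> real) \<Rightarrow> 'h::real_inner) \<Rightarrow> 'h set \<Rightarrow> 'h \<Rightarrow> real" where
  "min_l1_value Astar Hn y = Inf (l1norm ` {u \<in> ell1. constraint Astar Hn y u})"

lemma min_l1_value_le:
  "u \<in> ell1 \<Longrightarrow> constraint Astar Hn y u \<Longrightarrow> min_l1_value Astar Hn y \<le> l1norm u"
  unfolding min_l1_value_def
  by (rule cInf_lower) (auto intro: bdd_belowI[of _ 0] l1norm_nonneg)

lemma min_l1_value_greatest:
  assumes "u \<in> ell1" "constraint Astar Hn y u"
    and "\<And>v. v \<in> ell1 \<Longrightarrow> constraint Astar Hn y v \<Longrightarrow> c \<le> l1norm v"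
  shows "c \<le> min_l1_value Astar Hn y"
  unfolding min_l1_value_def using assms by (intro cInf_greatest) auto

context
  fixes A :: "'h::real_inner \<Rightarrow> nat \<Rightarrow> real" and Astar and Hn :: "'h set"
  assumes A: "bounded_linear_c0 A" and adj: "is_adjoint_l1 A Astar"
begin

lemma constraint_add:
  assumes "u \<in> ell1" "v \<in> ell1" "constraint Astar Hn x u" "constraint Astar Hn y v"
  shows "constraint Astar Hn (x + y) (\<lambda>i. u i + v i)"
  using assms adjoint_l1_add[OF A adj] unfolding constraint_def by (simp add: inner_add_right)

lemma constraint_scale:
  assumes "u \<in> ell1" "constraint Astar Hn x u"
  shows "constraint Astar Hn (t *\<^sub>R x) (\<lambda>i. t * u i)"
  using assms adjoint_l1_scale[OF A adj] unfolding constraint_def by simp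

lemma constraint_zero: "constraint Astar Hn 0 (\<lambda>_. 0)"
  using adj zero_ell1 unfolding is_adjoint_l1_def constraint_def by (simp add: inner_commute)

lemma subspace_feasible_data:
  assumes "subspace Hn"
  shows "subspace (feasible_data Astar Hn)"
  unfolding subspace_def feasible_data_def
proof (intro conjI ballI allI)
  show "0 \<in> {y \<in> Hn. \<exists>u\<in>ell1. constraint Astar Hn y u}"
    using assms constraint_zero zero_ell1 by (auto simp: subspace_0)
next
  fix x y assume "x \<in> {y \<in> Hn. \<exists>u\<in>ell1. constraint Astar Hn y u}"
    "y \<in> {y \<in> Hn. \<exists>u\<in>ell1. constraint Astar Hn y u}"
  then show "x + y \<in> {y \<in> Hn. \<exists>u\<in>ell1. constraint Astar Hn y u}"
    using assms constraint_add ell1_add by (fastforce simp: subspace_add)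
next
  fix c x assume "x \<in> {y \<in> Hn. \<exists>u\<in>ell1. constraint Astar Hn y u}"
  then show "c *\<^sub>R x \<in> {y \<in> Hn. \<exists>u\<in>ell1. constraint Astar Hn y u}"
    using assms constraint_scale ell1_scale by (fastforce simp: subspace_scale)
qed

lemma min_l1_value_zero: "min_l1_value Astar Hn 0 = 0"
proof (rule antisym)
  show "min_l1_value Astar Hn 0 \<le> 0"
    using min_l1_value_le[OF zero_ell1 constraint_zero] by (simp add: l1norm_def)
  show "0 \<le> min_l1_value Astar Hn 0"
    using min_l1_value_greatest[OF zero_ell1 constraint_zero] l1norm_nonneg by blast
qed

lemma min_l1_value_scale_le:
  assumes "t > 0" "u0 \<in> ell1" "constraint Astar Hn x u0"
  shows "min_l1_value Astar Hn (t *\<^sub>R x) \<le> t * min_l1_value Astar Hn x"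
proof -
  have "min_l1_value Astar Hn (t *\<^sub>R x) / t \<le> l1norm u"
    if "u \<in> ell1" "constraint Astar Hn x u" for u
  proof -
    have "min_l1_value Astar Hn (t *\<^sub>R x) \<le> l1norm (\<lambda>i. t * u i)"
      using that by (intro min_l1_value_le ell1_scale constraint_scale)
    also have "\<dots> = t * l1norm u" using l1norm_scale[OF that(1)] assms(1) by simp
    finally show ?thesis using assms(1) by (simp add: divide_le_eq mult.commute)
  qed
  then have "min_l1_value Astar Hn (t *\<^sub>R x) / t \<le> min_l1_value Astar Hn x"
    using min_l1_value_greatest[OF assms(2,3)] by blast
  then show ?thesis using assms(1) by (simp add: divide_le_eq mult.commute)
qed

lemma sublinear_min_l1_value: "sublinear_on (feasible_data Astar Hn) (min_l1_value Astar Hn)"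
  unfolding sublinear_on_def
proof (intro conjI ballI allI impI)
  fix x y assume "x \<in> feasible_data Astar Hn" "y \<in> feasible_data Astar Hn"
  then obtain u0 v0 where u0: "u0 \<in> ell1" "constraint Astar Hn x u0"
    and v0: "v0 \<in> ell1" "constraint Astar Hn y v0"
    unfolding feasible_data_def by blast
  let ?q = "min_l1_value Astar Hn"
  have "?q (x + y) - l1norm v \<le> ?q x" if v: "v \<in> ell1" "constraint Astar Hn y v" for v
  proof (rule min_l1_value_greatest[OF u0])
    fix u assume u: "u \<in> ell1" "constraint Astar Hn x u"
    have "?q (x + y) \<le> l1norm (\<lambda>i. u i + v i)"
      using u v by (intro min_l1_value_le ell1_add constraint_add)
    also have "\<dots> \<le> l1norm u + l1norm v" using u v by (intro l1norm_add)
    finally show "?q (x + y) - l1norm v \<le> l1norm u" by simp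
  qed
  then have "?q (x + y) - ?q x \<le> ?q y"
    using v0 by (intro min_l1_value_greatest) force+
  then show "?q (x + y) \<le> ?q x + ?q y" by simp
next
  fix x and t :: real assume x: "x \<in> feasible_data Astar Hn" and "t \<ge> 0"
  then obtain u0 where u0: "u0 \<in> ell1" "constraint Astar Hn x u0"
    unfolding feasible_data_def by blast
  show "min_l1_value Astar Hn (t *\<^sub>R x) = t * min_l1_value Astar Hn x"
  proof (cases "t = 0")
    case True
    then show ?thesis by (simp add: min_l1_value_zero)
  next
    case False
    then have t: "t > 0" using \<open>t \<ge> 0\<close> by simp
    have "min_l1_value Astar Hn x = min_l1_value Astar Hn ((1 / t) *\<^sub>R (t *\<^sub>R x))"
      using t by simp
    also have "\<dots> \<le> (1 / t) * min_l1_value Astar Hn (t *\<^sub>R x)"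
      using t u0 by (intro min_l1_value_scale_le[of _ "\<lambda>i. t * u0 i"] ell1_scale constraint_scale) simp_all
    finally have "t * min_l1_value Astar Hn x \<le> min_l1_value Astar Hn (t *\<^sub>R x)"
      using t by (simp add: field_simps)
    then show ?thesis using min_l1_value_scale_le[OF t u0] by simp
  qed
qed

lemma min_solution_dual_certificate:
  assumes B: "finite B" "span B = Hn" and min: "is_min_solution Astar Hn f un"
  shows "\<exists>w\<in>Hn. (\<forall>u\<in>ell1. w \<bullet> Astar u \<le> l1norm u) \<and> w \<bullet> Astar un = l1norm un"
proof -
  let ?R = "feasible_data Astar Hn" and ?q = "min_l1_value Astar Hn"
  have un: "un \<in> ell1" "constraint Astar Hn f un"
    and minimal: "\<And>u. u \<in> ell1 \<Longrightarrow> constraint Astar Hn f u \<Longrightarrow> l1norm un \<le> l1norm u"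
    using min unfolding is_min_solution_def by auto
  have proj: "\<exists>p\<in>Hn. \<forall>z\<in>Hn. z \<bullet> p = z \<bullet> x" for x
    using projection_onto_finite_span_exists[OF B(1)] B(2) by blast
  have "subspace ?R" using B(2) subspace_span subspace_feasible_data by blast
  moreover have "?R \<subseteq> span B" using B(2) unfolding feasible_data_def by blast
  ultimately obtain C where C: "finite C" "span C = ?R"
    using subspace_of_finite_span_has_finite_basis B(1) by blast
  obtain y0 where y0: "y0 \<in> Hn" "\<forall>z\<in>Hn. z \<bullet> y0 = z \<bullet> f" using proj by blast
  then have same_constraint: "constraint Astar Hn y0 u \<longleftrightarrow> constraint Astar Hn f u" for u
    unfolding constraint_def by simp
  have "y0 \<in> ?R" using y0(1) un same_constraint unfolding feasible_data_def by blast
  moreover have q_y0: "?q y0 = l1norm un"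
  proof (rule antisym)
    show "?q y0 \<le> l1norm un" using un same_constraint by (intro min_l1_value_le) auto
    show "l1norm un \<le> ?q y0" using un minimal same_constraint by (intro min_l1_value_greatest) auto
  qed
  ultimately obtain w where w: "w \<in> ?R" "\<forall>y\<in>?R. w \<bullet> y \<le> ?q y" "w \<bullet> y0 = ?q y0"
    using sublinear_supporting_functional[OF C(1)] sublinear_min_l1_value C(2) by metis
  have w_Hn: "w \<in> Hn" using w(1) unfolding feasible_data_def by blast
  have "w \<bullet> Astar u \<le> l1norm u" if u: "u \<in> ell1" for u
  proof -
    obtain p where p: "p \<in> Hn" "\<forall>z\<in>Hn. z \<bullet> p = z \<bullet> Astar u" using proj by blast
    then have "constraint Astar Hn p u" unfolding constraint_def by simp
    then have "p \<in> ?R" and "?q p \<le> l1norm u"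
      using p(1) u min_l1_value_le unfolding feasible_data_def by blast+
    moreover have "w \<bullet> Astar u = w \<bullet> p" using p(2) w_Hn by simp
    ultimately show ?thesis using w(2) by force
  qed
  moreover have "w \<bullet> Astar un = l1norm un"
    using un(2) w_Hn y0(2) w(3) q_y0 unfolding constraint_def by simp
  ultimately show ?thesis using w_Hn by blast
qed

lemma dual_certificate_in_subdiff_l1:
  assumes un: "un \<in> ell1" and eq: "w \<bullet> Astar un = l1norm un"
    and le: "\<forall>u\<in>ell1. w \<bullet> Astar u \<le> l1norm u"
  shows "A w \<in> subdiff_l1 un"
proof -
  have coord: "w \<bullet> Astar (unit_seq i) = A w i" for i
    using inner_adjoint_l1_unit_seq[OF adj] by (simp add: inner_commute)
  have "\<bar>A w i\<bar> \<le> 1" for i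
  proof -
    have "A w i \<le> 1" using le unit_seq_ell1 l1norm_unit_seq coord by metis
    moreover have "- A w i \<le> 1"
    proof -
      let ?e = "\<lambda>j. (-1) * unit_seq i j"
      have "w \<bullet> Astar ?e \<le> l1norm ?e" using le ell1_scale[OF unit_seq_ell1] by blast
      moreover have "w \<bullet> Astar ?e = - A w i"
        using adjoint_l1_scale[OF A adj unit_seq_ell1, of "-1" i] coord[of i] by simp
      moreover have "l1norm ?e = 1"
        using l1norm_scale[OF unit_seq_ell1, of "-1" i] l1norm_unit_seq[of i] by simp
      ultimately show ?thesis by simp
    qed
    ultimately show ?thesis by simp
  qed
  moreover have "(\<Sum>i. A w i * un i) = l1norm un"
    using adj un eq unfolding is_adjoint_l1_def by (simp add: mult.commute inner_commute)
  ultimately show ?thesis unfolding subdiff_l1_def by simp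
qed

end

lemma subdiff_l1_range_imp_min_solution:
  assumes adj: "is_adjoint_l1 A Astar"
    and z0: "z0 \<in> Hn" "A z0 \<in> subdiff_l1 un"
    and un: "un \<in> ell1" "constraint Astar Hn f un"
  shows "is_min_solution Astar Hn f un"
proof -
  have bound: "\<forall>i. \<bar>A z0 i\<bar> \<le> 1" and norm: "(\<Sum>i. A z0 i * un i) = l1norm un"
    using z0(2) unfolding subdiff_l1_def by auto
  have "l1norm un \<le> l1norm u" if u: "u \<in> ell1" "constraint Astar Hn f u" for u
  proof -
    have "l1norm un = Astar un \<bullet> z0"
      using adj un(1) norm unfolding is_adjoint_l1_def by (simp add: mult.commute)
    also have "\<dots> = Astar u \<bullet> z0"
      using un(2) u(2) z0(1) unfolding constraint_def by (simp add: inner_commute)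
    also have "\<dots> = (\<Sum>i. u i * A z0 i)"
      using adj u(1) unfolding is_adjoint_l1_def by simp
    also have "\<dots> \<le> l1norm u" using u(1) bound by (rule suminf_mult_le_l1norm)
    finally show ?thesis .
  qed
  then show ?thesis unfolding is_min_solution_def using un by blast
qed

theorem proposition2:
  fixes A :: "'h::{real_inner, complete_space} \<Rightarrow> (nat \<Rightarrow> real)"
    and Astar :: "(nat \<Rightarrow> real) \<Rightarrow> 'h"
    and Hn :: "'h set" and n :: nat and f un :: _
  assumes "bounded_linear_c0 A"
    and "is_adjoint_l1 A Astar"
    and "subspace Hn"
    and "\<exists>B. finite B \<and> independent B \<and> span B = Hn \<and> card B = n"
    and "\<forall>z\<in>Hn. A z = (\<lambda>_. 0) \<longrightarrow> z = 0"
  shows "is_min_solution Astar Hn f un \<longleftrightarrow>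
           un \<in> En A Hn \<and> constraint Astar Hn f un"
proof
  assume min: "is_min_solution Astar Hn f un"
  obtain B where "finite B" "span B = Hn" using assms(4) by blast
  then obtain w where "w \<in> Hn" "\<forall>u\<in>ell1. w \<bullet> Astar u \<le> l1norm u" "w \<bullet> Astar un = l1norm un"
    using min_solution_dual_certificate[OF assms(1,2) _ _ min] by blast
  moreover have "un \<in> ell1" "constraint Astar Hn f un"
    using min unfolding is_min_solution_def by auto
  ultimately show "un \<in> En A Hn \<and> constraint Astar Hn f un"
    using dual_certificate_in_subdiff_l1[OF assms(1,2)] unfolding En_def by blast
next
  assume "un \<in> En A Hn \<and> constraint Astar Hn f un"
  then show "is_min_solution Astar Hn f un"
    using subdiff_l1_range_imp_min_solution[OF assms(2)] unfolding En_def by blast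
qed

end
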